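(* Let $\{A_i\}_{i\in I}$ be a finite set of ReCiPe agents with discrete-system representation $\langle\mathcal{V},\rho,\theta\rangle$ and let $\mathcal{T}=\|_{i\in I}\mathcal{T}(A_i)$. Then the system traces $s_0m_0s_1m_1\dots$ with $\theta(s_0)$ are exactly the paths $s_0,a_0,s_1,a_1,\dots$ of $\mathcal{T}$ all of whose labels are send labels, under the identification of the observation $m_t=\langle ch_t,{\bf d}_t,k,\pi_t\rangle$ with the label $a_t=({\bf d}_t,k,\pi_t,!,ch_t)$.
   Context: Fix a set $CV$ of common variables, a set $D$ of data variables, and a set $Ch$ of channels containing the broadcast channel $\star$; variables range over finite domains. A ReCiPe agent is $A_i=\langle V_i,f_i,g^i_s,g^i_r,\mathcal{T}^i_s,\mathcal{T}^i_r,\theta_i\rangle$: $V_i$ finite set of local variables (local state $s_i$ = assignment to $V_i$); $f_i:CV\to V_i$ renaming, also the assertion $\bigwedge_{cv}cv=f_i(cv)$; send guard $g^i_s(V_i,Ch,D,CV)$; receive guard $g^i_r(V_i,Ch)$ with $g^i_r(V_i,\star)=\mathsf{true}$; send/receive transition assertions $\mathcal{T}^i_s,\mathcal{T}^i_r$ over $(V_i,V_i',D,Ch)$ with $\forall v,{\bf d}\,\exists v'.\,\mathcal{T}^i_r(v,v',{\bf d},\star)$; initial assertion $\theta_i$. Predicates over $CV$ are identified with sets of assignments; $\pi(f_i^{-1}(s_i))$ means the assignment $cv\mapsto s_i(f_i(cv))$ satisfies $\pi$. CTS semantics $\mathcal{T}(A_i)$: states = local states, initial states those satisfying $\theta_i$,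 $\mathsf{ls}(s)=\{c:g^i_r(s,c)\}$, transitions $(s,({\bf d},i,\pi,!,c),s')$ iff $\mathcal{T}^i_s(s,s',{\bf d},c)$ and $\pi=g^i_s(s,c,{\bf d})$, and $(s,({\bf d},i',\pi,?,c),s')$ iff $\mathcal{T}^i_r(s,s',{\bf d},c)$, $i'\neq i$, $c\in\mathsf{ls}(s)$ and $\pi(f_i^{-1}(s))$. Parallel composition of CTSs: product states and initial states, union of listening sets, and transitions: a send $(\upsilon,!,c)$ by one component combined with either a receive $(\upsilon,?,c)$ of the other or, if the other does not listen to $c$, the other staying put; two receives combine, or a receive combines with a non-listening component staying put; on $\star$, a send or receive by one component combines with the other staying put when the other has no $(\upsilon,?,\star)$ transition. A path of a CTS is an infinite sequence $s_0,a_0,s_1,a_1,\dots$ with $s_0$ initial and each $(s_j,a_j,s_{j+1})$ a transition. Discrete representation: $\mathcal{V}=\bigcup_iV_i$, $\theta=\bigwedge_i\theta_i$. A system trace is an infinite sequence $s_0m_0s_1m_1\dots$ of global states and observations such that for all $t$: $m_t=\langle ch_t,{\bf d}_t,k,\pi_t\rangle$, $\pi_t=g^k_s(s^k_t,{\bf d}_t,ch_t)$, and $(s_t,s_{t+1})$ satisfies $\mathcal{T}^k_s(s^k_t,s^k_{t+1},{\bf d}_t,ch_t)\wedge\bigwedge_{j\neq k}\exists CV.\,f_j\wedge[(g^j_r(s^j_t,ch_t)\wedge\mathcal{T}^j_r(s^j_t,s^j_{t+1},{\bf d}_t,ch_t)\wedge\pi_t)\vee(\neg g^j_r(s^j_t,ch_t)\wedge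 s^j_t=s^j_{t+1})\vee(ch_t=\star\wedge\neg\pi_t\wedge s^j_t=s^j_{t+1})]$, where $s^j_t$ is the projection of $s_t$ to $V_j$. *)

theory Defs
  imports Main
begin

text \<open>A local/global state is an assignment of values to a set of
variables, modelled as a partial map whose domain is that set of variables.
Data assignments are abstracted by the type 'd, channels by 'ch, and a predicate over the
common variables CV is a set of CV-assignments, i.e. a function ('cv => 'val) => bool.\<close>

type_synonym ('var, 'val) asg = "'var \<Rightarrow> 'val option"
type_synonym ('cv, 'val) cvpred = "('cv \<Rightarrow> 'val) \<Rightarrow> bool"

record ('var, 'val, 'cv, 'd, 'ch) agent =
  vars :: "'var set"
  rn   :: "'cv \<Rightarrow> 'var"
  gsnd :: "('var, 'val) asg \<Rightarrow> 'ch \<Rightarrow> 'd \<Rightarrow> ('cv, 'val) cvpred"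
  grcv :: "('var, 'val) asg \<Rightarrow> 'ch \<Rightarrow> bool"
  Tsnd :: "('var, 'val) asg \<Rightarrow> ('var, 'val) asg \<Rightarrow> 'd \<Rightarrow> 'ch \<Rightarrow> bool"
  Trcv :: "('var, 'val) asg \<Rightarrow> ('var, 'val) asg \<Rightarrow> 'd \<Rightarrow> 'ch \<Rightarrow> bool"
  theta :: "('var, 'val) asg \<Rightarrow> bool"

definition lstates :: "('var, 'val, 'cv, 'd, 'ch, 'z) agent_scheme \<Rightarrow> ('var, 'val) asg set" where
  "lstates A = {s. dom s = vars A}"

text \<open>The CV-assignment cv |-> s(f(cv)) (written f^{-1}(s) in the paper).\<close>
definition cv_view :: "('var, 'val, 'cv, 'd, 'ch, 'z) agent_scheme \<Rightarrow> ('var, 'val) asg \<Rightarrow> ('cv \<Rightarrow> 'val)" where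
  "cv_view A s = (\<lambda>cv. the (s (rn A cv)))"

text \<open>Well-formedness conditions of a ReCiPe agent (star is the broadcast channel).\<close>
definition wf_agent :: "'ch \<Rightarrow> ('var, 'val, 'cv, 'd, 'ch, 'z) agent_scheme \<Rightarrow> bool" where
  "wf_agent star A \<longleftrightarrow>
     finite (vars A) \<and> range (rn A) \<subseteq> vars A \<and>
     (\<forall>s \<in> lstates A. grcv A s star) \<and>
     (\<forall>s \<in> lstates A. \<forall>d. \<exists>s' \<in> lstates A. Trcv A s s' d star)"

datatype dir = Snd | Rcv

datatype ('d, 'i, 'p, 'ch) lbl = Lbl 'd 'i 'p dir 'ch

record ('s, 'l, 'ch) cts =
  cstates :: "'s set"
  cinit   :: "'s set"
  clisten :: "'s \<Rightarrow> 'ch set"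
  ctrans  :: "('s \<times> 'l \<times> 's) set"

type_synonym ('var, 'val, 'cv, 'd, 'i, 'ch) rcts =
  "(('var, 'val) asg, ('d, 'i, ('cv, 'val) cvpred, 'ch) lbl, 'ch) cts"

definition cts_of :: "'i \<Rightarrow> ('var, 'val, 'cv, 'd, 'ch) agent \<Rightarrow> ('var, 'val, 'cv, 'd, 'i, 'ch) rcts" where
  "cts_of i A = \<lparr> cstates = lstates A,
     cinit = {s \<in> lstates A. theta A s},
     clisten = (\<lambda>s. {c. grcv A s c}),
     ctrans = {(s, Lbl d i p Snd c, s') | s s' d p c.
                  s \<in> lstates A \<and> s' \<in> lstates A \<and> Tsnd A s s' d c \<and> p = gsnd A s c d}
            \<union> {(s, Lbl d i' p Rcv c, s') | s s' d i' p c.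
                  s \<in> lstates A \<and> s' \<in> lstates A \<and> Trcv A s s' d c \<and> i' \<noteq> i \<and>
                  c \<in> {c. grcv A s c} \<and> p (cv_view A s)} \<rparr>"

definition par_step :: "'ch \<Rightarrow> ('s, ('d, 'i, 'p, 'ch) lbl, 'ch) cts \<Rightarrow> ('s, ('d, 'i, 'p, 'ch) lbl, 'ch) cts
     \<Rightarrow> 's \<Rightarrow> 's \<Rightarrow> ('d, 'i, 'p, 'ch) lbl \<Rightarrow> 's \<Rightarrow> 's \<Rightarrow> bool" where
  "par_step star T1 T2 s1 s2 a s1' s2' \<longleftrightarrow>
    (case a of Lbl d i p dr c \<Rightarrow>
      let snd = Lbl d i p Snd c; rcv = Lbl d i p Rcv c in
      (dr = Snd \<and>
        (((s1, snd, s1') \<in> ctrans T1 \<and> ((s2, rcv, s2') \<in> ctrans T2 \<or> (c \<notin> clisten T2 s2 \<and> s2' = s2)))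
         \<or> ((s2, snd, s2') \<in> ctrans T2 \<and> ((s1, rcv, s1') \<in> ctrans T1 \<or> (c \<notin> clisten T1 s1 \<and> s1' = s1)))))
      \<or> (dr = Rcv \<and>
        (((s1, rcv, s1') \<in> ctrans T1 \<and> (s2, rcv, s2') \<in> ctrans T2)
         \<or> ((s1, rcv, s1') \<in> ctrans T1 \<and> c \<notin> clisten T2 s2 \<and> s2' = s2)
         \<or> ((s2, rcv, s2') \<in> ctrans T2 \<and> c \<notin> clisten T1 s1 \<and> s1' = s1)))
      \<or> (c = star \<and>
        (((s1, a, s1') \<in> ctrans T1 \<and> s2' = s2 \<and> \<not> (\<exists>s2''. (s2, rcv, s2'') \<in> ctrans T2))
         \<or> ((s2, a, s2') \<in> ctrans T2 \<and> s1' = s1 \<and> \<not> (\<exists>s1''. (s1, rcv, s1'') \<in> ctrans T1)))))"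

text \<open>Binary parallel composition. Product states (s1, s2) are identified with the joint
assignment s1 ++ s2 (components have disjoint sets of variables).\<close>
definition par :: "'ch \<Rightarrow> ('var, 'val, 'cv, 'd, 'i, 'ch) rcts \<Rightarrow> ('var, 'val, 'cv, 'd, 'i, 'ch) rcts
     \<Rightarrow> ('var, 'val, 'cv, 'd, 'i, 'ch) rcts" where
  "par star T1 T2 = \<lparr>
     cstates = {s1 ++ s2 | s1 s2. s1 \<in> cstates T1 \<and> s2 \<in> cstates T2},
     cinit = {s1 ++ s2 | s1 s2. s1 \<in> cinit T1 \<and> s2 \<in> cinit T2},
     clisten = (\<lambda>s. {c. \<exists>s1 s2. s = s1 ++ s2 \<and> s1 \<in> cstates T1 \<and> s2 \<in> cstates T2 \<and>
                           (c \<in> clisten T1 s1 \<or> c \<in> clisten T2 s2)}),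
     ctrans = {(s, a, s') | s a s'. \<exists>s1 s2 s1' s2'.
                 s = s1 ++ s2 \<and> s' = s1' ++ s2' \<and>
                 s1 \<in> cstates T1 \<and> s1' \<in> cstates T1 \<and> s2 \<in> cstates T2 \<and> s2' \<in> cstates T2 \<and>
                 par_step star T1 T2 s1 s2 a s1' s2'} \<rparr>"

fun par_all :: "'ch \<Rightarrow> ('i \<Rightarrow> ('var, 'val, 'cv, 'd, 'ch) agent) \<Rightarrow> 'i list
     \<Rightarrow> ('var, 'val, 'cv, 'd, 'i, 'ch) rcts" where
  "par_all star A [] = \<lparr> cstates = {}, cinit = {}, clisten = (\<lambda>_. {}), ctrans = {} \<rparr>"
| "par_all star A [i] = cts_of i (A i)"
| "par_all star A (i # j # js) = par star (cts_of i (A i)) (par_all star A (j # js))"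

definition is_path :: "('s, 'l, 'ch) cts \<Rightarrow> (nat \<Rightarrow> 's) \<Rightarrow> (nat \<Rightarrow> 'l) \<Rightarrow> bool" where
  "is_path T s a \<longleftrightarrow> s 0 \<in> cinit T \<and> (\<forall>j. (s j, a j, s (Suc j)) \<in> ctrans T)"

fun is_send :: "('d, 'i, 'p, 'ch) lbl \<Rightarrow> bool" where
  "is_send (Lbl d i p dr c) = (dr = Snd)"

type_synonym ('cv, 'val, 'd, 'i, 'ch) obs = "'ch \<times> 'd \<times> 'i \<times> ('cv, 'val) cvpred"

definition allvars :: "'i set \<Rightarrow> ('i \<Rightarrow> ('var, 'val, 'cv, 'd, 'ch) agent) \<Rightarrow> 'var set" where
  "allvars I A = (\<Union>i\<in>I. vars (A i))"

definition sys_theta :: "'i set \<Rightarrow> ('i \<Rightarrow> ('var, 'val, 'cv, 'd, 'ch) agent) \<Rightarrow> ('var, 'val) asg \<Rightarrow> bool" where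
  "sys_theta I A s \<longleftrightarrow> (\<forall>i\<in>I. theta (A i) (s |` vars (A i)))"

definition sys_step :: "'ch \<Rightarrow> 'i set \<Rightarrow> ('i \<Rightarrow> ('var, 'val, 'cv, 'd, 'ch) agent)
     \<Rightarrow> ('var, 'val) asg \<Rightarrow> ('cv, 'val, 'd, 'i, 'ch) obs \<Rightarrow> ('var, 'val) asg \<Rightarrow> bool" where
  "sys_step star I A s m s' \<longleftrightarrow>
    (case m of (ch, d, k, p) \<Rightarrow>
      k \<in> I \<and>
      p = gsnd (A k) (s |` vars (A k)) ch d \<and>
      Tsnd (A k) (s |` vars (A k)) (s' |` vars (A k)) d ch \<and>
      (\<forall>j \<in> I - {k}.
         let sj = s |` vars (A j); sj' = s' |` vars (A j) in
         \<exists>cvv. (\<forall>cv. cvv cv = the (sj (rn (A j) cv))) \<and>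
           ((grcv (A j) sj ch \<and> Trcv (A j) sj sj' d ch \<and> p cvv)
            \<or> (\<not> grcv (A j) sj ch \<and> sj = sj')
            \<or> (ch = star \<and> \<not> p cvv \<and> sj = sj'))))"

definition is_sys_trace :: "'ch \<Rightarrow> 'i set \<Rightarrow> ('i \<Rightarrow> ('var, 'val, 'cv, 'd, 'ch) agent)
     \<Rightarrow> (nat \<Rightarrow> ('var, 'val) asg) \<Rightarrow> (nat \<Rightarrow> ('cv, 'val, 'd, 'i, 'ch) obs) \<Rightarrow> bool" where
  "is_sys_trace star I A s m \<longleftrightarrow>
     (\<forall>t. dom (s t) = allvars I A \<and> sys_step star I A (s t) (m t) (s (Suc t)))"

fun obs_lbl :: "('cv, 'val, 'd, 'i, 'ch) obs \<Rightarrow> ('d, 'i, ('cv, 'val) cvpred, 'ch) lbl" where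
  "obs_lbl (ch, d, k, p) = Lbl d k p Snd ch"

end

(* Call the three alternatives of the discrete transition relation for a non-sending agent --
   receive, ignore a channel it does not listen to, discard a broadcast whose predicate fails --
   "reacting" to the message. By induction over the list of agents, the composition of a set J
   of agents is characterised agent-wise: its states are the joint assignments, it sends
   (d, k, pi, !, c) exactly when k is in J, k sends and every other agent of J reacts, and it
   receives a message of an outside sender exactly when all agents of J react and one of them
   receives. The only delicate clause of the parallel composition is the broadcast one, where a
   component may stay put only if it has no receive transition at all; by well-formedness (every
   agent listens to star and can always receive on it) this happens exactly when none of its
   agents satisfies the predicate, i.e. when all of them discard. With the send transitions of
   the composition known, a path with send labels is literally a system trace. *)

theory Submission
  imports Defs "HOL-Library.Disjoint_Sets"
begin

lemma restrict_map_eq_self: "dom m \<subseteq> A \<Longrightarrow> m |` A = m"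
  by (rule ext) (metis domIff restrict_in restrict_out subsetD)

lemma map_add_restrict_left:
  "dom m1 \<inter> dom m2 = {} \<Longrightarrow> (m1 ++ m2) |` dom m1 = m1"
  by (rule ext) (auto simp: restrict_map_def map_add_def split: option.splits)

lemma map_add_restrict_right: "(m1 ++ m2) |` dom m2 = m2"
  by (rule ext) (auto simp: restrict_map_def map_add_def split: option.splits)

lemma restrict_map_add_split: "dom m = V1 \<union> V2 \<Longrightarrow> m |` V1 ++ m |` V2 = m"
  by (rule ext) (auto simp: restrict_map_def map_add_def split: option.splits)

lemma map_eq_if_restrictions_eq:
  assumes "dom m = (\<Union>j\<in>J. V j)" "dom m' = (\<Union>j\<in>J. V j)" "\<forall>j\<in>J. m |` V j = m' |` V j"
  shows "m = m'"
proof
  fix x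
  show "m x = m' x"
  proof (cases "\<exists>j\<in>J. x \<in> V j")
    case True
    then obtain j where "j \<in> J" "x \<in> V j" by blast
    then show ?thesis using assms(3) restrict_in by metis
  next
    case False
    then show ?thesis using assms(1,2) by (metis UN_iff domIff)
  qed
qed

lemma ex_map_glue:
  assumes "disjoint_family_on (\<lambda>j. dom (m j)) J"
  shows "\<exists>g. dom g = (\<Union>j\<in>J. dom (m j)) \<and> (\<forall>j\<in>J. g |` dom (m j) = m j)"
proof -
  define owner where "owner x = (SOME j. j \<in> J \<and> x \<in> dom (m j))" for x
  have owner: "owner x = j" if "j \<in> J" "x \<in> dom (m j)" for j x
    unfolding owner_def
  proof (rule some_equality)
    fix j' assume "j' \<in> J \<and> x \<in> dom (m j')"
    then show "j' = j" using that assms unfolding disjoint_family_on_def by blast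
  qed (use that in simp)
  define g where "g x = (if \<exists>j\<in>J. x \<in> dom (m j) then m (owner x) x else None)" for x
  have g_at: "g x = m j x" if "j \<in> J" "x \<in> dom (m j)" for j x
    using that by (auto simp: g_def owner)
  have "dom g = (\<Union>j\<in>J. dom (m j))"
  proof
    show "dom g \<subseteq> (\<Union>j\<in>J. dom (m j))" by (auto simp: g_def split: if_splits)
    show "(\<Union>j\<in>J. dom (m j)) \<subseteq> dom g" using g_at by fastforce
  qed
  moreover have "g |` dom (m j) = m j" if "j \<in> J" for j
    using g_at[OF that] by (auto simp: restrict_map_def fun_eq_iff domIff)
  ultimately show ?thesis by blast
qed

lemma ex_map_add_split_iff:
  assumes "V1 \<inter> V2 = {}"
  shows "(\<exists>s1 s2. s = s1 ++ s2 \<and> dom s1 = V1 \<and> dom s2 = V2 \<and> P s1 s2)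
     \<longleftrightarrow> dom s = V1 \<union> V2 \<and> P (s |` V1) (s |` V2)"
proof
  assume "\<exists>s1 s2. s = s1 ++ s2 \<and> dom s1 = V1 \<and> dom s2 = V2 \<and> P s1 s2"
  then obtain s1 s2 where "s = s1 ++ s2" "dom s1 = V1" "dom s2 = V2" "P s1 s2" by blast
  then show "dom s = V1 \<union> V2 \<and> P (s |` V1) (s |` V2)"
    using assms map_add_restrict_left[of s1 s2] map_add_restrict_right[of s1 s2] by auto
next
  assume "dom s = V1 \<union> V2 \<and> P (s |` V1) (s |` V2)"
  then show "\<exists>s1 s2. s = s1 ++ s2 \<and> dom s1 = V1 \<and> dom s2 = V2 \<and> P s1 s2"
    using restrict_map_add_split[of s V1 V2] by (intro exI[of _ "s |` V1"] exI[of _ "s |` V2"]) auto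
qed

definition cts_reacts :: "'ch \<Rightarrow> ('s, ('d, 'i, 'p, 'ch) lbl, 'ch) cts \<Rightarrow> 's \<Rightarrow> 'd \<Rightarrow> 'i \<Rightarrow> 'p \<Rightarrow> 'ch
    \<Rightarrow> 's \<Rightarrow> bool" where
  "cts_reacts star T s d k p c s' \<longleftrightarrow> (s, Lbl d k p Rcv c, s') \<in> ctrans T \<or>
     (c \<notin> clisten T s \<and> s' = s) \<or>
     (c = star \<and> s' = s \<and> \<not> (\<exists>s''. (s, Lbl d k p Rcv c, s'') \<in> ctrans T))"

lemma par_step_Rcv_iff:
  "par_step star T1 T2 s1 s2 (Lbl d k p Rcv c) s1' s2' \<longleftrightarrow>
     cts_reacts star T1 s1 d k p c s1' \<and> cts_reacts star T2 s2 d k p c s2' \<and>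
     ((s1, Lbl d k p Rcv c, s1') \<in> ctrans T1 \<or> (s2, Lbl d k p Rcv c, s2') \<in> ctrans T2)"
  unfolding par_step_def cts_reacts_def Let_def by auto

lemma par_step_Snd_iff:
  "par_step star T1 T2 s1 s2 (Lbl d k p Snd c) s1' s2' \<longleftrightarrow>
     (s1, Lbl d k p Snd c, s1') \<in> ctrans T1 \<and> cts_reacts star T2 s2 d k p c s2' \<or>
     (s2, Lbl d k p Snd c, s2') \<in> ctrans T2 \<and> cts_reacts star T1 s1 d k p c s1'"
  unfolding par_step_def cts_reacts_def Let_def by auto

context
  fixes T1 T2 :: "('var, 'val, 'cv, 'd, 'i, 'ch) rcts" and V1 V2 :: "'var set"
  assumes cstates1: "cstates T1 = {s. dom s = V1}"
    and cstates2: "cstates T2 = {s. dom s = V2}"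
    and disjoint: "V1 \<inter> V2 = {}"
begin

lemma cstates_par: "cstates (par star T1 T2) = {s. dom s = V1 \<union> V2}"
proof -
  have "s \<in> cstates (par star T1 T2) \<longleftrightarrow> (\<exists>s1 s2. s = s1 ++ s2 \<and> dom s1 = V1 \<and> dom s2 = V2 \<and> True)"
    for s by (auto simp: par_def cstates1 cstates2)
  then have "s \<in> cstates (par star T1 T2) \<longleftrightarrow> dom s = V1 \<union> V2 \<and> True" for s
    by (simp only: ex_map_add_split_iff[OF disjoint])
  then show ?thesis by (intro set_eqI) (simp only: mem_Collect_eq simp_thms)
qed

lemma clisten_par:
  assumes "dom s = V1 \<union> V2"
  shows "clisten (par star T1 T2) s = clisten T1 (s |` V1) \<union> clisten T2 (s |` V2)"
proof -
  have "c \<in> clisten (par star T1 T2) s \<longleftrightarrow> (\<exists>s1 s2. s = s1 ++ s2 \<and> dom s1 = V1 \<and> dom s2 = V2 \<and>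
      c \<in> clisten T1 s1 \<union> clisten T2 s2)" for c
    by (auto simp: par_def cstates1 cstates2)
  then show ?thesis using assms by (simp only: ex_map_add_split_iff[OF disjoint]) auto
qed

lemma cinit_par:
  assumes "cinit T1 \<subseteq> cstates T1" "cinit T2 \<subseteq> cstates T2"
  shows "cinit (par star T1 T2) = {s. dom s = V1 \<union> V2 \<and> s |` V1 \<in> cinit T1 \<and> s |` V2 \<in> cinit T2}"
proof -
  have "s \<in> cinit (par star T1 T2) \<longleftrightarrow> (\<exists>s1 s2. s = s1 ++ s2 \<and> dom s1 = V1 \<and> dom s2 = V2 \<and>
      s1 \<in> cinit T1 \<and> s2 \<in> cinit T2)" for s
    using assms unfolding par_def cstates1 cstates2 by (simp add: subset_iff) blast
  then have "s \<in> cinit (par star T1 T2) \<longleftrightarrow>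
      dom s = V1 \<union> V2 \<and> s |` V1 \<in> cinit T1 \<and> s |` V2 \<in> cinit T2" for s
    by (simp only: ex_map_add_split_iff[OF disjoint])
  then show ?thesis by (intro set_eqI) (simp only: mem_Collect_eq simp_thms)
qed

lemma ctrans_par_iff:
  "(s, a, s') \<in> ctrans (par star T1 T2) \<longleftrightarrow> dom s = V1 \<union> V2 \<and> dom s' = V1 \<union> V2 \<and>
     par_step star T1 T2 (s |` V1) (s |` V2) a (s' |` V1) (s' |` V2)"
proof -
  have "(s, a, s') \<in> ctrans (par star T1 T2) \<longleftrightarrow> (\<exists>s1 s2. s = s1 ++ s2 \<and> dom s1 = V1 \<and> dom s2 = V2 \<and>
      (\<exists>s1' s2'. s' = s1' ++ s2' \<and> dom s1' = V1 \<and> dom s2' = V2 \<and>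
        par_step star T1 T2 s1 s2 a s1' s2'))"
    by (auto simp: par_def cstates1 cstates2)
  then show ?thesis by (simp only: ex_map_add_split_iff[OF disjoint])
qed

end

definition receives :: "('var, 'val, 'cv, 'd, 'ch) agent \<Rightarrow> 'd \<Rightarrow> ('cv, 'val) cvpred \<Rightarrow> 'ch
    \<Rightarrow> ('var, 'val) asg \<Rightarrow> ('var, 'val) asg \<Rightarrow> bool" where
  "receives B d p c x y \<longleftrightarrow> grcv B x c \<and> Trcv B x y d c \<and> p (cv_view B x)"

definition reacts :: "'ch \<Rightarrow> ('var, 'val, 'cv, 'd, 'ch) agent \<Rightarrow> 'd \<Rightarrow> ('cv, 'val) cvpred \<Rightarrow> 'ch
    \<Rightarrow> ('var, 'val) asg \<Rightarrow> ('var, 'val) asg \<Rightarrow> bool" where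
  "reacts star B d p c x y \<longleftrightarrow> receives B d p c x y \<or> (\<not> grcv B x c \<and> y = x)
     \<or> (c = star \<and> \<not> p (cv_view B x) \<and> y = x)"

lemma dom_restrict_vars: "dom s = allvars J A \<Longrightarrow> j \<in> J \<Longrightarrow> dom (s |` vars (A j)) = vars (A j)"
  by (auto simp: allvars_def)

lemma allvars_Un: "allvars (I \<union> J) A = allvars I A \<union> allvars J A"
  by (simp add: allvars_def)

lemma allvars_Int_vars [simp]: "j \<in> J \<Longrightarrow> allvars J A \<inter> vars (A j) = vars (A j)"
  by (auto simp: allvars_def)

locale composition =
  fixes star :: 'ch
    and A :: "'i \<Rightarrow> ('var, 'val, 'cv, 'd, 'ch) agent"
    and J :: "'i set"
    and T :: "('var, 'val, 'cv, 'd, 'i, 'ch) rcts"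
  assumes wf_agents: "j \<in> J \<Longrightarrow> wf_agent star (A j)"
    and disjoint_vars: "disjoint_family_on (\<lambda>j. vars (A j)) J"
    and cstates_eq: "cstates T = {s. dom s = allvars J A}"
    and cinit_eq: "cinit T = {s. dom s = allvars J A \<and> (\<forall>j\<in>J. theta (A j) (s |` vars (A j)))}"
    and clisten_eq: "dom s = allvars J A \<Longrightarrow>
      clisten T s = {c. \<exists>j\<in>J. grcv (A j) (s |` vars (A j)) c}"
    and ctrans_dom: "(s, a, s') \<in> ctrans T \<Longrightarrow> dom s = allvars J A \<and> dom s' = allvars J A"
    \<comment> \<open>An agent never receives its own messages, so receptions are only characterised for
       senders outside \<open>J\<close>.\<close>
    and rcv_iff: "\<lbrakk>k \<notin> J; dom s = allvars J A; dom s' = allvars J A\<rbrakk> \<Longrightarrow>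
      (s, Lbl d k p Rcv c, s') \<in> ctrans T \<longleftrightarrow>
        (\<forall>j\<in>J. reacts star (A j) d p c (s |` vars (A j)) (s' |` vars (A j))) \<and>
        (\<exists>j\<in>J. receives (A j) d p c (s |` vars (A j)) (s' |` vars (A j)))"
    and snd_iff: "\<lbrakk>dom s = allvars J A; dom s' = allvars J A\<rbrakk> \<Longrightarrow>
      (s, Lbl d k p Snd c, s') \<in> ctrans T \<longleftrightarrow>
        k \<in> J \<and> p = gsnd (A k) (s |` vars (A k)) c d \<and>
        Tsnd (A k) (s |` vars (A k)) (s' |` vars (A k)) d c \<and>
        (\<forall>j\<in>J - {k}. reacts star (A j) d p c (s |` vars (A j)) (s' |` vars (A j)))"
begin

lemma broadcast_receivable:
  assumes "k \<notin> J" "dom s = allvars J A" "j0 \<in> J" "p (cv_view (A j0) (s |` vars (A j0)))"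
  shows "\<exists>s'. (s, Lbl d k p Rcv star, s') \<in> ctrans T"
proof -
  \<comment> \<open>Agents satisfying the predicate receive (possible by well-formedness), the others discard.\<close>
  have "\<exists>y. dom y = vars (A j) \<and> reacts star (A j) d p star (s |` vars (A j)) y \<and>
      (p (cv_view (A j) (s |` vars (A j))) \<longrightarrow> receives (A j) d p star (s |` vars (A j)) y)"
    if "j \<in> J" for j
  proof (cases "p (cv_view (A j) (s |` vars (A j)))")
    case True
    have "s |` vars (A j) \<in> lstates (A j)"
      using dom_restrict_vars[OF assms(2) that] by (simp add: lstates_def)
    with wf_agents[OF that] obtain y where "dom y = vars (A j)"
      "Trcv (A j) (s |` vars (A j)) y d star" "grcv (A j) (s |` vars (A j)) star"
      unfolding wf_agent_def lstates_def by blast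
    with True show ?thesis unfolding reacts_def receives_def by blast
  next
    case False
    then show ?thesis using dom_restrict_vars[OF assms(2) that] unfolding reacts_def by blast
  qed
  then obtain t where t: "\<forall>j\<in>J. dom (t j) = vars (A j) \<and>
      reacts star (A j) d p star (s |` vars (A j)) (t j) \<and>
      (p (cv_view (A j) (s |` vars (A j))) \<longrightarrow> receives (A j) d p star (s |` vars (A j)) (t j))"
    by metis
  have "disjoint_family_on (\<lambda>j. dom (t j)) J"
    using disjoint_vars t by (simp add: disjoint_family_on_def)
  from ex_map_glue[OF this] obtain s'
    where "dom s' = (\<Union>j\<in>J. dom (t j))" "\<forall>j\<in>J. s' |` dom (t j) = t j"
    by blast
  with t have "dom s' = allvars J A" "\<forall>j\<in>J. s' |` vars (A j) = t j"
    by (simp_all add: allvars_def)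
  then have "(s, Lbl d k p Rcv star, s') \<in> ctrans T"
    using rcv_iff[OF assms(1,2)] t assms(3,4) by auto
  then show ?thesis by blast
qed

lemma cts_reacts_if_reacts_all:
  assumes k: "k \<notin> J" and dom: "dom s = allvars J A" "dom s' = allvars J A"
    and reacts: "\<forall>j\<in>J. reacts star (A j) d p c (s |` vars (A j)) (s' |` vars (A j))"
  shows "cts_reacts star T s d k p c s'"
proof (cases "\<exists>j\<in>J. receives (A j) d p c (s |` vars (A j)) (s' |` vars (A j))")
  case True
  then show ?thesis using reacts rcv_iff[OF k dom] unfolding cts_reacts_def by blast
next
  case False
  with reacts have idle: "\<forall>j\<in>J. s' |` vars (A j) = s |` vars (A j) \<and>
      (\<not> grcv (A j) (s |` vars (A j)) c \<or> c = star \<and> \<not> p (cv_view (A j) (s |` vars (A j))))"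
    unfolding reacts_def by blast
  then have "s' = s"
    using map_eq_if_restrictions_eq[where m = s' and m' = s and V = "\<lambda>j. vars (A j)"] dom
    by (simp add: allvars_def)
  show ?thesis
  proof (cases "c = star")
    case True
    have "\<not> (\<exists>s''. (s, Lbl d k p Rcv c, s'') \<in> ctrans T)"
    proof
      assume "\<exists>s''. (s, Lbl d k p Rcv c, s'') \<in> ctrans T"
      then obtain s'' j where "j \<in> J" "receives (A j) d p c (s |` vars (A j)) (s'' |` vars (A j))"
        using rcv_iff[OF k dom(1)] ctrans_dom by blast
      with idle show False unfolding receives_def by blast
    qed
    then show ?thesis using True \<open>s' = s\<close> unfolding cts_reacts_def by blast
  next
    case False
    then have "c \<notin> clisten T s" using idle clisten_eq[OF dom(1)] by auto
    then show ?thesis using \<open>s' = s\<close> unfolding cts_reacts_def by blast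
  qed
qed

lemma reacts_all_if_cts_reacts:
  assumes k: "k \<notin> J" and dom: "dom s = allvars J A" "dom s' = allvars J A"
    and "cts_reacts star T s d k p c s'"
  shows "\<forall>j\<in>J. reacts star (A j) d p c (s |` vars (A j)) (s' |` vars (A j))"
  using assms(4) unfolding cts_reacts_def
proof (elim disjE)
  assume "(s, Lbl d k p Rcv c, s') \<in> ctrans T"
  then show ?thesis using rcv_iff[OF k dom] by blast
next
  assume "c \<notin> clisten T s \<and> s' = s"
  then show ?thesis using clisten_eq[OF dom(1)] unfolding reacts_def by auto
next
  assume discard: "c = star \<and> s' = s \<and> \<not> (\<exists>s''. (s, Lbl d k p Rcv c, s'') \<in> ctrans T)"
  then have "\<not> p (cv_view (A j) (s |` vars (A j)))" if "j \<in> J" for j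
    using broadcast_receivable[OF k dom(1) that] by blast
  with discard show ?thesis unfolding reacts_def by blast
qed

lemma reacts_all_iff:
  assumes "k \<notin> J" "dom s = allvars J A" "dom s' = allvars J A"
  shows "(\<forall>j\<in>J. reacts star (A j) d p c (s |` vars (A j)) (s' |` vars (A j))) \<longleftrightarrow>
    cts_reacts star T s d k p c s'"
  using cts_reacts_if_reacts_all[OF assms] reacts_all_if_cts_reacts[OF assms] by blast

end

lemma composition_cts_of:
  assumes "wf_agent star (A i)"
  shows "composition star A {i} (cts_of i (A i))"
proof unfold_locales
  show "disjoint_family_on (\<lambda>j. vars (A j)) {i}" by (simp add: disjoint_family_on_def)
qed (auto simp: assms cts_of_def lstates_def allvars_def restrict_map_eq_self
    reacts_def receives_def)

locale composition_pair =
  c1: composition star A J1 T1 + c2: composition star A J2 T2 for star A J1 T1 J2 T2 +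
  assumes disjoint_ids: "J1 \<inter> J2 = {}"
    and disjoint_vars: "disjoint_family_on (\<lambda>j. vars (A j)) (J1 \<union> J2)"
begin

lemma disjoint_allvars: "allvars J1 A \<inter> allvars J2 A = {}"
proof -
  have "vars (A i) \<inter> vars (A j) = {}" if "i \<in> J1" "j \<in> J2" for i j
  proof (rule disjoint_family_onD[OF disjoint_vars])
    show "i \<noteq> j" using that disjoint_ids by blast
  qed (use that in simp_all)
  then show ?thesis unfolding allvars_def by blast
qed

lemmas cstates_pair = cstates_par[OF c1.cstates_eq c2.cstates_eq disjoint_allvars]
  and cinit_pair = cinit_par[OF c1.cstates_eq c2.cstates_eq disjoint_allvars]
  and clisten_pair = clisten_par[OF c1.cstates_eq c2.cstates_eq disjoint_allvars]
  and ctrans_pair_iff = ctrans_par_iff[OF c1.cstates_eq c2.cstates_eq disjoint_allvars]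

lemma dom_restrict_allvars:
  assumes "dom s = allvars (J1 \<union> J2) A"
  shows "dom (s |` allvars J1 A) = allvars J1 A" "dom (s |` allvars J2 A) = allvars J2 A"
  using assms by (auto simp: allvars_Un)

lemma rcv_par_iff:
  assumes k: "k \<notin> J1 \<union> J2"
    and dom: "dom s = allvars (J1 \<union> J2) A" "dom s' = allvars (J1 \<union> J2) A"
  shows "(s, Lbl d k p Rcv c, s') \<in> ctrans (par star T1 T2) \<longleftrightarrow>
    (\<forall>j\<in>J1 \<union> J2. reacts star (A j) d p c (s |` vars (A j)) (s' |` vars (A j))) \<and>
    (\<exists>j\<in>J1 \<union> J2. receives (A j) d p c (s |` vars (A j)) (s' |` vars (A j)))"
proof -
  have k1: "k \<notin> J1" and k2: "k \<notin> J2" using k by auto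
  note dom1 = dom_restrict_allvars(1)[OF dom(1)] dom_restrict_allvars(1)[OF dom(2)]
  note dom2 = dom_restrict_allvars(2)[OF dom(1)] dom_restrict_allvars(2)[OF dom(2)]
  have rcv1: "(s |` allvars J1 A, Lbl d k p Rcv c, s' |` allvars J1 A) \<in> ctrans T1 \<longleftrightarrow>
      (\<forall>j\<in>J1. reacts star (A j) d p c (s |` vars (A j)) (s' |` vars (A j))) \<and>
      (\<exists>j\<in>J1. receives (A j) d p c (s |` vars (A j)) (s' |` vars (A j)))"
    using c1.rcv_iff[OF k1 dom1] by simp
  have rcv2: "(s |` allvars J2 A, Lbl d k p Rcv c, s' |` allvars J2 A) \<in> ctrans T2 \<longleftrightarrow>
      (\<forall>j\<in>J2. reacts star (A j) d p c (s |` vars (A j)) (s' |` vars (A j))) \<and>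
      (\<exists>j\<in>J2. receives (A j) d p c (s |` vars (A j)) (s' |` vars (A j)))"
    using c2.rcv_iff[OF k2 dom2] by simp
  have reacts1: "cts_reacts star T1 (s |` allvars J1 A) d k p c (s' |` allvars J1 A) \<longleftrightarrow>
      (\<forall>j\<in>J1. reacts star (A j) d p c (s |` vars (A j)) (s' |` vars (A j)))"
    using c1.reacts_all_iff[OF k1 dom1] by simp
  have reacts2: "cts_reacts star T2 (s |` allvars J2 A) d k p c (s' |` allvars J2 A) \<longleftrightarrow>
      (\<forall>j\<in>J2. reacts star (A j) d p c (s |` vars (A j)) (s' |` vars (A j)))"
    using c2.reacts_all_iff[OF k2 dom2] by simp
  show ?thesis
    using dom unfolding ctrans_pair_iff par_step_Rcv_iff allvars_Un rcv1 rcv2 reacts1 reacts2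
    by (simp add: ball_Un bex_Un) blast
qed

lemma snd_par_iff:
  assumes dom: "dom s = allvars (J1 \<union> J2) A" "dom s' = allvars (J1 \<union> J2) A"
  shows "(s, Lbl d k p Snd c, s') \<in> ctrans (par star T1 T2) \<longleftrightarrow>
    k \<in> J1 \<union> J2 \<and> p = gsnd (A k) (s |` vars (A k)) c d \<and>
    Tsnd (A k) (s |` vars (A k)) (s' |` vars (A k)) d c \<and>
    (\<forall>j\<in>(J1 \<union> J2) - {k}. reacts star (A j) d p c (s |` vars (A j)) (s' |` vars (A j)))"
proof -
  let ?sends = "p = gsnd (A k) (s |` vars (A k)) c d \<and>
    Tsnd (A k) (s |` vars (A k)) (s' |` vars (A k)) d c"
  let ?reacts = "\<lambda>j. reacts star (A j) d p c (s |` vars (A j)) (s' |` vars (A j))"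
  note dom1 = dom_restrict_allvars(1)[OF dom(1)] dom_restrict_allvars(1)[OF dom(2)]
  note dom2 = dom_restrict_allvars(2)[OF dom(1)] dom_restrict_allvars(2)[OF dom(2)]
  let ?snd1 = "(s |` allvars J1 A, Lbl d k p Snd c, s' |` allvars J1 A) \<in> ctrans T1"
  let ?snd2 = "(s |` allvars J2 A, Lbl d k p Snd c, s' |` allvars J2 A) \<in> ctrans T2"
  let ?reacts1 = "cts_reacts star T1 (s |` allvars J1 A) d k p c (s' |` allvars J1 A)"
  let ?reacts2 = "cts_reacts star T2 (s |` allvars J2 A) d k p c (s' |` allvars J2 A)"
  have par: "(s, Lbl d k p Snd c, s') \<in> ctrans (par star T1 T2) \<longleftrightarrow>
      ?snd1 \<and> ?reacts2 \<or> ?snd2 \<and> ?reacts1"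
    using dom by (simp add: ctrans_pair_iff par_step_Snd_iff allvars_Un)
  consider (J1) "k \<in> J1" "k \<notin> J2" | (J2) "k \<notin> J1" "k \<in> J2" | (none) "k \<notin> J1" "k \<notin> J2"
    using disjoint_ids by blast
  then show ?thesis
  proof cases
    case J1
    have "?snd1 \<longleftrightarrow> ?sends \<and> (\<forall>j\<in>J1 - {k}. ?reacts j)" and "\<not> ?snd2"
      and "?reacts2 \<longleftrightarrow> (\<forall>j\<in>J2. ?reacts j)"
      using J1 c1.snd_iff[OF dom1] c2.snd_iff[OF dom2] c2.reacts_all_iff[OF J1(2) dom2] by simp_all
    then show ?thesis using J1 unfolding par by auto
  next
    case J2
    have "?snd2 \<longleftrightarrow> ?sends \<and> (\<forall>j\<in>J2 - {k}. ?reacts j)" and "\<not> ?snd1"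
      and "?reacts1 \<longleftrightarrow> (\<forall>j\<in>J1. ?reacts j)"
      using J2 c1.snd_iff[OF dom1] c2.snd_iff[OF dom2] c1.reacts_all_iff[OF J2(1) dom1] by simp_all
    then show ?thesis using J2 unfolding par by auto
  next
    case none
    then have "\<not> ?snd1" "\<not> ?snd2" using c1.snd_iff[OF dom1] c2.snd_iff[OF dom2] by simp_all
    then show ?thesis using none unfolding par by simp
  qed
qed

lemma composition_par: "composition star A (J1 \<union> J2) (par star T1 T2)"
proof unfold_locales
  show "wf_agent star (A j)" if "j \<in> J1 \<union> J2" for j
    using that c1.wf_agents c2.wf_agents by blast
  show "disjoint_family_on (\<lambda>j. vars (A j)) (J1 \<union> J2)" by (fact disjoint_vars)
  show "cstates (par star T1 T2) = {s. dom s = allvars (J1 \<union> J2) A}"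
    by (simp add: cstates_pair allvars_Un)
  have "cinit T1 \<subseteq> cstates T1" "cinit T2 \<subseteq> cstates T2"
    by (auto simp: c1.cinit_eq c1.cstates_eq c2.cinit_eq c2.cstates_eq)
  then show "cinit (par star T1 T2) =
      {s. dom s = allvars (J1 \<union> J2) A \<and> (\<forall>j\<in>J1 \<union> J2. theta (A j) (s |` vars (A j)))}"
    by (auto simp: cinit_pair c1.cinit_eq c2.cinit_eq allvars_Un)
  show "clisten (par star T1 T2) s = {c. \<exists>j\<in>J1 \<union> J2. grcv (A j) (s |` vars (A j)) c}"
    if "dom s = allvars (J1 \<union> J2) A" for s
    using that dom_restrict_allvars[OF that]
    by (auto simp: clisten_pair c1.clisten_eq c2.clisten_eq allvars_Un)
  show "dom s = allvars (J1 \<union> J2) A \<and> dom s' = allvars (J1 \<union> J2) A"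
    if "(s, a, s') \<in> ctrans (par star T1 T2)" for s a s'
    using that by (simp add: ctrans_pair_iff allvars_Un)
qed (fact rcv_par_iff snd_par_iff)+

end

lemma composition_par_all:
  assumes "ids \<noteq> []" "distinct ids" "disjoint_family_on (\<lambda>j. vars (A j)) (set ids)"
    and "\<forall>j\<in>set ids. wf_agent star (A j)"
  shows "composition star A (set ids) (par_all star A ids)"
  using assms
proof (induction star A ids rule: par_all.induct)
  case (1 star A)
  then show ?case by simp
next
  case (2 star A i)
  then show ?case by (simp add: composition_cts_of)
next
  case (3 star A i j js)
  have "composition star A (set (j # js)) (par_all star A (j # js))"
    using 3 by (auto intro: disjoint_family_on_mono)
  moreover have "composition star A {i} (cts_of i (A i))"
    using 3 by (simp add: composition_cts_of)
  ultimately have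
    "composition_pair star A {i} (cts_of i (A i)) (set (j # js)) (par_all star A (j # js))"
    using 3(3-) by (simp add: composition_pair_def composition_pair_axioms_def insert_commute)
  then have "composition star A ({i} \<union> set (j # js))
      (par star (cts_of i (A i)) (par_all star A (j # js)))"
    by (rule composition_pair.composition_par)
  then show ?case by (simp add: insert_commute)
qed

lemma sys_step_agent_iff_reacts:
  "(\<exists>cvv. (\<forall>cv. cvv cv = the (x (rn B cv))) \<and>
      (grcv B x c \<and> Trcv B x y d c \<and> p cvv \<or> \<not> grcv B x c \<and> x = y \<or> c = star \<and> \<not> p cvv \<and> x = y))
   \<longleftrightarrow> reacts star B d p c x y"
  by (auto simp: reacts_def receives_def cv_view_def fun_eq_iff[symmetric])

lemma is_send_iff_obs_lbl: "is_send a \<longleftrightarrow> (\<exists>m. a = obs_lbl m)"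
  by (cases a) (auto intro: obs_lbl.simps[symmetric])

context composition
begin

lemma sys_step_iff_ctrans:
  assumes "dom s = allvars J A" "dom s' = allvars J A"
  shows "sys_step star J A s m s' \<longleftrightarrow> (s, obs_lbl m, s') \<in> ctrans T"
proof -
  obtain ch d k p where m: "m = (ch, d, k, p)" by (cases m)
  show ?thesis
    unfolding m sys_step_def obs_lbl.simps snd_iff[OF assms] Let_def
    by (simp add: sys_step_agent_iff_reacts)
qed

lemma sys_traces_eq_send_paths:
  "{(s, \<lambda>t. obs_lbl (m t)) | s m. is_sys_trace star J A s m \<and> sys_theta J A (s 0)}
     = {(s, a). is_path T s a \<and> (\<forall>t. is_send (a t))}"
proof (intro set_eqI iffI)
  fix x assume "x \<in> {(s, \<lambda>t. obs_lbl (m t)) | s m. is_sys_trace star J A s m \<and> sys_theta J A (s 0)}"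
  then obtain s m where x: "x = (s, \<lambda>t. obs_lbl (m t))"
    and trace: "is_sys_trace star J A s m" and init: "sys_theta J A (s 0)"
    by blast
  have dom: "dom (s t) = allvars J A" for t
    using trace unfolding is_sys_trace_def by blast
  have "is_path T s (\<lambda>t. obs_lbl (m t))"
    using trace init dom sys_step_iff_ctrans
    unfolding is_path_def is_sys_trace_def cinit_eq sys_theta_def by simp
  moreover have "is_send (obs_lbl (m t))" for t
    using is_send_iff_obs_lbl by blast
  ultimately show "x \<in> {(s, a). is_path T s a \<and> (\<forall>t. is_send (a t))}"
    using x by simp
next
  fix x assume "x \<in> {(s, a). is_path T s a \<and> (\<forall>t. is_send (a t))}"
  then obtain s a where x: "x = (s, a)" and path: "is_path T s a" and sends: "\<forall>t. is_send (a t)"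
    by blast
  have "\<forall>t. \<exists>m. a t = obs_lbl m"
    using sends is_send_iff_obs_lbl by blast
  then obtain m where a: "a = (\<lambda>t. obs_lbl (m t))"
    by (metis choice)
  have trans: "(s t, a t, s (Suc t)) \<in> ctrans T" for t
    using path unfolding is_path_def by blast
  have dom: "dom (s t) = allvars J A" for t
    using ctrans_dom[OF trans[of t]] by blast
  have "is_sys_trace star J A s m"
    using trans dom sys_step_iff_ctrans unfolding is_sys_trace_def a by simp
  moreover have "sys_theta J A (s 0)"
    using path unfolding is_path_def cinit_eq sys_theta_def by simp
  ultimately show
    "x \<in> {(s, \<lambda>t. obs_lbl (m t)) | s m. is_sys_trace star J A s m \<and> sys_theta J A (s 0)}"
    unfolding x a by blast
qed

end

theorem mainTheorem4:
  fixes star :: "'ch"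
    and A :: "'i \<Rightarrow> ('var, 'val::finite, 'cv, 'd, 'ch) agent"
    and I :: "'i set"
    and ids :: "'i list"
  assumes "set ids = I" and "distinct ids" and "I \<noteq> {}"
    and "\<forall>i\<in>I. wf_agent star (A i)"
    and "\<forall>i\<in>I. \<forall>j\<in>I. i \<noteq> j \<longrightarrow> vars (A i) \<inter> vars (A j) = {}"
  shows "{(s, \<lambda>t. obs_lbl (m t)) | s m. is_sys_trace star I A s m \<and> sys_theta I A (s 0)}
       = {(s, a). is_path (par_all star A ids) s a \<and> (\<forall>t. is_send (a t))}"
proof -
  have "composition star A I (par_all star A ids)"
    using composition_par_all[of ids A star] assms by (auto simp: disjoint_family_on_def)
  then show ?thesis by (rule composition.sys_traces_eq_send_paths)
qed

end
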